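(* Let $\alpha>1$, and suppose that both $f$ and $Pf$ belong to $\mathcal{M}_\alpha$. Then for all $x>0$, $(Vf)(x)=(P(Pf))(x)$, i.e. the Voronoi operator equals the iterated Müntz operator $P^2$.
   Context: For $\alpha>1$, $\mathcal{M}_\alpha$ denotes the class of functions $f:[0,\infty)\to\mathbb{C}$ with $f\in C^{2}[0,\infty)$ and $f^{(j)}(x)=O(x^{-\alpha-j})$ as $x\to\infty$ for $j=0,1,2$. The Müntz operator is $(Pf)(x)=\sum_{n=1}^\infty f(nx)-\frac1x\int_0^\infty f(y)\,dy$, $x>0$ (extended continuously to $x=0$ when it is required to lie in $\mathcal{M}_\alpha$). The Voronoi operator is $(Vf)(x)=\sum_{n=1}^\infty d(n)f(nx)-\int_0^\infty f(xy)(\log y+2\gamma)\,dy$, where $d(n)$ is the number of divisors of $n$ and $\gamma$ is Euler's constant. *)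

theory Defs
  imports "HOL-Analysis.Analysis" "HOL-Library.Landau_Symbols"
begin

text \<open>The class M_alpha: f is C^2 on [0,oo) (one-sided derivatives at 0) and
  f^(j)(x) = O(x^(-alpha-j)) as x -> oo for j = 0,1,2.  Only values on [0,oo) matter.\<close>
definition M_class :: "real \<Rightarrow> (real \<Rightarrow> complex) set" where
  "M_class \<alpha> = {f. \<exists>f1 f2 :: real \<Rightarrow> complex.
      (\<forall>x\<ge>0. (f has_vector_derivative f1 x) (at x within {0..})) \<and>
      (\<forall>x\<ge>0. (f1 has_vector_derivative f2 x) (at x within {0..})) \<and>
      continuous_on {0..} f2 \<and>
      (\<lambda>x. norm (f x)) \<in> O[at_top](\<lambda>x. x powr (-\<alpha>)) \<and>
      (\<lambda>x. norm (f1 x)) \<in> O[at_top](\<lambda>x. x powr (-\<alpha> - 1)) \<and>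
      (\<lambda>x. norm (f2 x)) \<in> O[at_top](\<lambda>x. x powr (-\<alpha> - 2))}"

text \<open>Muentz operator (meaningful for x > 0).\<close>
definition muentz :: "(real \<Rightarrow> complex) \<Rightarrow> real \<Rightarrow> complex" where
  "muentz f x = (\<Sum>n. f (real (Suc n) * x)) - complex_of_real (1 / x) * integral {0..} f"

definition divisor_count :: "nat \<Rightarrow> nat" where
  "divisor_count n = card {k. k dvd n}"

definition voronoi :: "(real \<Rightarrow> complex) \<Rightarrow> real \<Rightarrow> complex" where
  "voronoi f x = (\<Sum>n. of_nat (divisor_count (Suc n)) * f (real (Suc n) * x))
     - integral {0..} (\<lambda>y. f (x * y) * complex_of_real (ln y + 2 * euler_mascheroni))"

end

theory Submission
  imports Defs "HOL-Real_Asymp.Real_Asymp"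
begin

(* The proof has three steps.
   (1) Since Pf(x) and sum_n f(nx) are both O(x^-alpha) while the correction term is
       (1/x) * int f, we get int_0^oo f = 0, so Pf(x) = sum_n f(nx).
   (2) Hence (P(Pf))(x) = sum_m sum_n f(mnx) - (1/x) int g, and grouping the absolutely
       convergent double series by k = mn gives sum_k d(k) f(kx).
   (3) For a function phi with int phi = 0 and G(t) = sum_n phi(nt) we show
       int_0^oo G = int_0^oo phi(u) ln u du: the integral of G over [1/N, oo) equals
       int phi(u) H(floor(uN)) du (H = harmonic numbers), and H(floor(uN)) - ln N - gamma
       tends to ln u, dominated by |ln u| + 2.  Applied to phi(y) = f(xy) this identifies
       the integral term of V f with (1/x) int g, since the 2 gamma part vanishes.
   The file first collects integration facts on half-lines, then introduces a locale of
   decaying functions (continuous, bounded, O(t^-alpha)) that every member of M_alpha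
   satisfies and proves (1) there; after facts on harmonic numbers it develops (3) in the
   same locale, then the divisor-sum rearrangement (2), and finally assembles the
   corollary from these three steps. *)

section \<open>Integration on half-lines\<close>

lemma image_mult_atLeast:
  fixes c a :: real assumes "c > 0"
  shows "(\<lambda>t. c * t) ` {a..} = {c*a..}"
proof
  show "(\<lambda>t. c * t) ` {a..} \<subseteq> {c*a..}" using assms by auto
  show "{c*a..} \<subseteq> (\<lambda>t. c * t) ` {a..}"
  proof
    fix y assume "y \<in> {c*a..}"
    then have "y / c \<in> {a..}" "y = c * (y / c)" using assms by (auto simp: field_simps)
    then show "y \<in> (\<lambda>t. c * t) ` {a..}" by blast
  qed
qed

lemma integral_dilation:
  fixes f :: "real \<Rightarrow> complex"
  assumes c: "c > 0" and f: "f absolutely_integrable_on {c*a..}"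
  shows "(\<lambda>t. f (c*t)) absolutely_integrable_on {a..}"
    and "integral {a..} (\<lambda>t. f (c*t)) = integral {c*a..} f / c"
proof -
  have der: "\<And>x. x \<in> {a..} \<Longrightarrow> ((\<lambda>t. c * t) has_field_derivative c) (at x within {a..})"
    by (auto intro!: derivative_eq_intros)
  have inj: "inj_on (\<lambda>t. c * t) {a..}" using c by (auto simp: inj_on_def)
  have "f absolutely_integrable_on (\<lambda>t. c*t) ` {a..} \<and>
        integral ((\<lambda>t. c*t) ` {a..}) f = integral {c*a..} f"
    unfolding image_mult_atLeast[OF c] using f by simp
  then have 1: "(\<lambda>x. c *\<^sub>R f (c * x)) absolutely_integrable_on {a..}"
     and 2: "integral {a..} (\<lambda>x. c *\<^sub>R f (c * x)) = integral {c*a..} f"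
    using has_absolute_integral_change_of_variables_real[of "{a..}" "\<lambda>t. c * t" "\<lambda>_. c" f
        "integral {c*a..} f", OF _ der inj] c by auto
  have "(\<lambda>x. (1/c) *\<^sub>R (c *\<^sub>R f (c * x))) absolutely_integrable_on {a..}"
    using absolutely_integrable_scaleR_left[OF 1] by blast
  then show "(\<lambda>t. f (c*t)) absolutely_integrable_on {a..}" using c by simp
  have "integral {a..} (\<lambda>x. c *\<^sub>R f (c * x)) = c *\<^sub>R integral {a..} (\<lambda>x. f (c * x))"
    by (rule integral_cmul)
  with 2 show "integral {a..} (\<lambda>t. f (c*t)) = integral {c*a..} f / c"
    using c by (simp add: scaleR_conv_of_real field_simps)
qed

text \<open>The operators are defined with integrals over \<open>[0,\<infinity>)\<close>; the analysis is done on
  \<open>(0,\<infinity>)\<close>, where \<open>ln\<close> and negative powers are defined.  The two differ by a null set.\<close>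

lemma negligible_atLeast_0_diff: "negligible ({0::real..} - {0<..} \<union> ({0<..} - {0..}))"
  by (rule negligible_subset[of "{0}"]) auto

lemma integral_atLeast_0_greaterThan:
  fixes f :: "real \<Rightarrow> 'a::banach"
  shows "integral {0..} f = integral {0<..} f"
  by (rule integral_spike_set; rule negligible_subset[OF negligible_atLeast_0_diff]) blast+

lemma absolutely_integrable_atLeast_0_greaterThan:
  fixes f :: "real \<Rightarrow> 'a::euclidean_space"
  shows "f absolutely_integrable_on {0..} \<longleftrightarrow> f absolutely_integrable_on {0<..}"
  unfolding absolutely_integrable_on_def
  by (simp only: integrable_spike_set_eq[OF negligible_atLeast_0_diff, of f]
      integrable_spike_set_eq[OF negligible_atLeast_0_diff, of "\<lambda>x. norm (f x)"])

lemma piecewise_powr_integrable: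
  fixes c g \<beta> :: real
  assumes "0 \<le> g" "g < 1" "\<beta> > 1"
  shows "(\<lambda>t. if t \<le> 1 then c * t powr (-g) else c * t powr (-\<beta>)) integrable_on {0<..}"
proof -
  have i1: "(\<lambda>t. c * t powr (-g)) integrable_on {0..1}"
    using integrable_on_cmult_left[OF integrable_on_powr_from_0[of "-g" 1]] assms by simp
  have i1': "(\<lambda>t. c * t powr (-g)) integrable_on {0<..1}"
    by (rule integrable_spike_set[OF i1]; rule negligible_subset[of "{0}"]) auto
  have "(\<lambda>t. t powr (-\<beta>)) integrable_on {1..}"
    using has_integral_powr_to_inf[of "-\<beta>" 1] assms by (auto simp: integrable_on_def)
  then have i2: "(\<lambda>t. c * t powr (-\<beta>)) integrable_on {1..}"
    using integrable_on_cmult_left[of "\<lambda>t. t powr (-\<beta>)"] by simp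
  have a: "(\<lambda>t. if t \<le> 1 then c * t powr (-g) else c * t powr (-\<beta>)) integrable_on {0<..1}"
    by (rule integrable_eq[OF i1']) auto
  have b: "(\<lambda>t. if t \<le> 1 then c * t powr (-g) else c * t powr (-\<beta>)) integrable_on {1..}"
    by (rule integrable_spike[OF i2, of "{1}"]) auto
  have "(\<lambda>t. if t \<le> 1 then c * t powr (-g) else c * t powr (-\<beta>)) integrable_on ({0<..1} \<union> {1..})"
    by (rule integrable_Un[OF _ a b]) (rule negligible_subset[of "{1}"], auto)
  moreover have "{0<..1} \<union> {1..} = {0::real<..}" by auto
  ultimately show ?thesis by simp
qed

lemma abs_ln_le_near_0:
  fixes t :: real assumes "0 < t" "t \<le> 1"
  shows "\<bar>ln t\<bar> \<le> 2 * t powr (-1/2)"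
proof -
  have "ln (t powr (-1/2)) \<le> t powr (-1/2) - 1" using assms by (intro ln_le_minus_one) simp
  moreover have "ln (t powr (-1/2)) = (-1/2) * ln t" using assms by (simp add: ln_powr)
  moreover have "ln t \<le> 0" using assms by simp
  ultimately show ?thesis by linarith
qed

lemma abs_ln_le_at_infinity:
  fixes t \<delta> :: real assumes "1 \<le> t" "\<delta> > 0"
  shows "\<bar>ln t\<bar> \<le> t powr \<delta> / \<delta>"
proof -
  have "ln (t powr \<delta>) \<le> t powr \<delta> - 1" using assms by (intro ln_le_minus_one) simp
  moreover have "ln (t powr \<delta>) = \<delta> * ln t" using assms by (simp add: ln_powr)
  moreover have "ln t \<ge> 0" using assms by simp
  ultimately have "\<delta> * \<bar>ln t\<bar> \<le> t powr \<delta>" by simp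
  then show ?thesis using assms by (simp add: field_simps)
qed

section \<open>Decaying functions\<close>

text \<open>The analytic input used from the class \<open>M_\<alpha>\<close>: continuity on \<open>(0,\<infinity>)\<close>,
  boundedness, and decay of order \<open>t^-\<alpha>\<close> with \<open>\<alpha> > 1\<close>.\<close>

locale decaying =
  fixes \<phi> :: "real \<Rightarrow> complex" and K \<alpha> :: real
  assumes cont: "continuous_on {0<..} \<phi>"
    and exponent: "\<alpha> > 1"
    and bounded: "\<And>t. t > 0 \<Longrightarrow> norm (\<phi> t) \<le> K"
    and decay: "\<And>t. t > 0 \<Longrightarrow> norm (\<phi> t) \<le> K * t powr (-\<alpha>)"

lemma M_class_decay_bound:
  fixes f :: "real \<Rightarrow> complex"
  assumes cont: "continuous_on {0..} f"
    and big: "(\<lambda>x. norm (f x)) \<in> O[at_top](\<lambda>x. x powr (-\<alpha>))"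
    and a: "\<alpha> \<ge> 0"
  shows "\<exists>K. \<forall>t>0. norm (f t) \<le> K \<and> norm (f t) \<le> K * t powr (-\<alpha>)"
proof -
  obtain c where c: "c > 0" and ev: "eventually (\<lambda>x. norm (norm (f x)) \<le> c * norm (x powr (-\<alpha>))) at_top"
    using big by (elim landau_o.bigE)
  obtain T where T: "\<And>x. x \<ge> T \<Longrightarrow> norm (norm (f x)) \<le> c * norm (x powr (-\<alpha>))"
    using ev unfolding eventually_at_top_linorder by blast
  define T' where "T' = max T 1"
  have T'1: "T' \<ge> 1" by (simp add: T'_def)
  have "compact (f ` {0..T'})"
    by (rule compact_continuous_image[OF continuous_on_subset[OF cont]]) auto
  then obtain B where B: "B > 0" "\<And>t. t \<in> {0..T'} \<Longrightarrow> norm (f t) \<le> B"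
    using compact_imp_bounded bounded_pos by (metis imageI)
  define K where "K = max (max B c) (B * T' powr \<alpha>)"
  have tail: "norm (f t) \<le> c * t powr (-\<alpha>)" if "t \<ge> T'" for t
    using T[of t] that T'1 by (auto simp: T'_def)
  show ?thesis
  proof (intro exI allI impI conjI)
    fix t :: real assume tp: "t > 0"
    show "norm (f t) \<le> K"
    proof (cases "t \<le> T'")
      case True then show ?thesis using B(2)[of t] tp by (auto simp: K_def)
    next
      case False
      have "t powr (-\<alpha>) \<le> 1" using powr_mono2'[of "-\<alpha>" 1 t] False T'1 a by simp
      then have "c * t powr (-\<alpha>) \<le> c" using c by (simp add: mult_left_le)
      then have "norm (f t) \<le> c" using tail[of t] False by linarith
      then show ?thesis by (simp add: K_def)
    qed
    show "norm (f t) \<le> K * t powr (-\<alpha>)"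
    proof (cases "t \<le> T'")
      case True
      have "T' powr (-\<alpha>) \<le> t powr (-\<alpha>)" using True tp a by (intro powr_mono2') auto
      then have "B * T' powr \<alpha> * T' powr (-\<alpha>) \<le> B * T' powr \<alpha> * t powr (-\<alpha>)"
        using B by (intro mult_left_mono) auto
      moreover have "B * T' powr \<alpha> * T' powr (-\<alpha>) = B" using T'1 by (simp add: powr_minus field_simps)
      moreover have "B * T' powr \<alpha> * t powr (-\<alpha>) \<le> K * t powr (-\<alpha>)"
        by (intro mult_right_mono) (auto simp: K_def)
      moreover have "norm (f t) \<le> B" using B(2)[of t] True tp by auto
      ultimately show ?thesis by linarith
    next
      case False
      then have "norm (f t) \<le> c * t powr (-\<alpha>)" using tail by simp
      also have "\<dots> \<le> K * t powr (-\<alpha>)" by (intro mult_right_mono) (auto simp: K_def)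
      finally show ?thesis .
    qed
  qed
qed

lemma M_class_decaying:
  assumes "f \<in> M_class \<alpha>" and "\<alpha> > 1"
  obtains K where "decaying f K \<alpha>"
proof -
  obtain f1 where d: "\<forall>x\<ge>0. (f has_vector_derivative f1 x) (at x within {0..})"
    and big: "(\<lambda>x. norm (f x)) \<in> O[at_top](\<lambda>x. x powr (-\<alpha>))"
    using assms(1) unfolding M_class_def by blast
  have cont: "continuous_on {0..} f" unfolding continuous_on_eq_continuous_within
    using d has_vector_derivative_continuous by fastforce
  obtain K where "\<forall>t>0. norm (f t) \<le> K \<and> norm (f t) \<le> K * t powr (-\<alpha>)"
    using M_class_decay_bound[OF cont big] assms(2) by auto
  moreover have "continuous_on {0<..} f" by (rule continuous_on_subset[OF cont]) auto
  ultimately have "decaying f K \<alpha>" using assms(2) by unfold_locales auto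
  then show ?thesis by (rule that)
qed

context decaying
begin

lemma K_nonneg: "K \<ge> 0"
  using bounded[of 1] by (auto intro: order_trans[OF norm_ge_zero])

lemma abs_integrable: "\<phi> absolutely_integrable_on {0<..}"
proof (rule measurable_bounded_by_integrable_imp_absolutely_integrable)
  show "\<phi> \<in> borel_measurable (lebesgue_on {0<..})"
    by (rule continuous_imp_measurable_on_sets_lebesgue[OF cont]) simp
  show "(\<lambda>t. if t \<le> 1 then K * t powr (-0) else K * t powr (-\<alpha>)) integrable_on {0<..}"
    by (rule piecewise_powr_integrable) (use exponent in auto)
  fix t :: real assume "t \<in> {0<..}"
  then show "norm (\<phi> t) \<le> (if t \<le> 1 then K * t powr (-0) else K * t powr (-\<alpha>))"
    using bounded[of t] decay[of t] by auto
qed simp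

lemma abs_integrable_atLeast: "b > 0 \<Longrightarrow> \<phi> absolutely_integrable_on {b..}"
  by (rule set_integrable_subset[OF abs_integrable]) auto

lemma integrable: "\<phi> integrable_on {0<..}"
  using abs_integrable by (auto simp: absolutely_integrable_on_def)

text \<open>The logarithmic moment \<open>\<integral> \<phi>(t) ln t dt\<close> exists: \<open>|ln t|\<close> costs at most
  \<open>t^-1/2\<close> near 0 and \<open>t^\<delta>\<close>, \<open>\<delta> = (\<alpha>-1)/2\<close>, at infinity.\<close>

lemma ln_abs_integrable: "(\<lambda>t. \<phi> t * of_real (ln t)) absolutely_integrable_on {0<..}"
proof (rule measurable_bounded_by_integrable_imp_absolutely_integrable)
  define \<delta> where "\<delta> = (\<alpha> - 1) / 2"
  have \<delta>: "\<delta> > 0" using exponent by (simp add: \<delta>_def)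
  define c where "c = K * (2 + 1 / \<delta>)"
  show "(\<lambda>t. \<phi> t * of_real (ln t)) \<in> borel_measurable (lebesgue_on {0<..})"
    by (rule continuous_imp_measurable_on_sets_lebesgue) (auto intro!: continuous_intros cont)
  show "(\<lambda>t. if t \<le> 1 then c * t powr (-(1/2)) else c * t powr (-((\<alpha>+1)/2))) integrable_on {0<..}"
    by (rule piecewise_powr_integrable) (use exponent in auto)
  fix t :: real assume t: "t \<in> {0<..}"
  have n: "norm (\<phi> t * of_real (ln t)) = norm (\<phi> t) * \<bar>ln t\<bar>" by (simp add: norm_mult)
  show "norm (\<phi> t * of_real (ln t)) \<le> (if t \<le> 1 then c * t powr (-(1/2)) else c * t powr (-((\<alpha>+1)/2)))"
  proof (cases "t \<le> 1")
    case True
    have "norm (\<phi> t) * \<bar>ln t\<bar> \<le> K * (2 * t powr (-1/2))"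
      using bounded[of t] t True abs_ln_le_near_0[of t] K_nonneg by (intro mult_mono) auto
    also have "\<dots> \<le> c * t powr (-(1/2))" unfolding c_def using K_nonneg \<delta>
      by (simp add: algebra_simps)
    finally show ?thesis using True n by simp
  next
    case False
    have "norm (\<phi> t) * \<bar>ln t\<bar> \<le> (K * t powr (-\<alpha>)) * (t powr \<delta> / \<delta>)"
      using decay[of t] t False abs_ln_le_at_infinity[of t \<delta>] \<delta> K_nonneg by (intro mult_mono) auto
    also have "\<dots> = (K / \<delta>) * (t powr (-\<alpha>) * t powr \<delta>)" by simp
    also have "t powr (-\<alpha>) * t powr \<delta> = t powr (-((\<alpha>+1)/2))"
    proof -
      have "-\<alpha> + \<delta> = -((\<alpha>+1)/2)" by (simp add: \<delta>_def field_simps)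
      then show ?thesis using powr_add[of t "-\<alpha>" \<delta>] by simp
    qed
    also have "(K / \<delta>) * t powr (-((\<alpha>+1)/2)) \<le> c * t powr (-((\<alpha>+1)/2))"
      unfolding c_def using K_nonneg \<delta> by (intro mult_right_mono) (auto simp: field_simps)
    finally show ?thesis using False n by simp
  qed
qed simp

lemma ln_integrable: "(\<lambda>t. \<phi> t * of_real (ln t)) integrable_on {0<..}"
  using ln_abs_integrable by (auto simp: absolutely_integrable_on_def)

lemma dilation_decaying:
  assumes x: "x > 0"
  shows "decaying (\<lambda>y. \<phi> (x * y)) (K * max 1 (x powr (-\<alpha>))) \<alpha>"
proof
  show "continuous_on {0<..} (\<lambda>y. \<phi> (x * y))"
    by (rule continuous_on_compose2[OF cont]) (use x in \<open>auto intro!: continuous_intros\<close>)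
  show "\<alpha> > 1" by (rule exponent)
  fix t :: real assume t: "t > 0"
  then have xt: "x * t > 0" using x by simp
  have "K * 1 \<le> K * max 1 (x powr (-\<alpha>))" using K_nonneg by (intro mult_left_mono) auto
  then show "norm (\<phi> (x * t)) \<le> K * max 1 (x powr (-\<alpha>))" using bounded[OF xt] by simp
  have "norm (\<phi> (x * t)) \<le> K * (x * t) powr (-\<alpha>)" using decay[OF xt] .
  also have "\<dots> = (K * x powr (-\<alpha>)) * t powr (-\<alpha>)" using x t by (simp add: powr_mult)
  also have "\<dots> \<le> K * max 1 (x powr (-\<alpha>)) * t powr (-\<alpha>)"
    using K_nonneg by (intro mult_right_mono mult_left_mono) auto
  finally show "norm (\<phi> (x * t)) \<le> K * max 1 (x powr (-\<alpha>)) * t powr (-\<alpha>)" .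
qed

definition zeta_alpha :: real where "zeta_alpha = (\<Sum>n. real (Suc n) powr (-\<alpha>))"

lemma zeta_alpha_summable: "summable (\<lambda>n. real (Suc n) powr (-\<alpha>))"
  using summable_ignore_initial_segment[of "\<lambda>n. real n powr (-\<alpha>)" 1]
    summable_real_powr_iff exponent by simp

lemma dilation_bound:
  assumes t: "t > 0"
  shows "norm (\<phi> (real (Suc n) * t)) \<le> K * t powr (-\<alpha>) * real (Suc n) powr (-\<alpha>)"
proof -
  have "norm (\<phi> (real (Suc n) * t)) \<le> K * (real (Suc n) * t) powr (-\<alpha>)"
    using decay t by simp
  also have "(real (Suc n) * t) powr (-\<alpha>) = real (Suc n) powr (-\<alpha>) * t powr (-\<alpha>)"
    using t by (simp add: powr_mult)
  finally show ?thesis by (simp add: algebra_simps)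
qed

lemma dilation_series_summable: "t > 0 \<Longrightarrow> summable (\<lambda>n. norm (\<phi> (real (Suc n) * t)))"
  by (rule summable_comparison_test[OF _ summable_mult[OF zeta_alpha_summable, of "K * t powr (-\<alpha>)"]])
     (use dilation_bound in auto)

lemma dilation_series_bound:
  assumes x: "x > 0"
  shows "norm (\<Sum>n. \<phi> (real (Suc n) * x)) \<le> K * zeta_alpha * x powr (-\<alpha>)"
proof -
  have "norm (\<Sum>n. \<phi> (real (Suc n) * x)) \<le> (\<Sum>n. norm (\<phi> (real (Suc n) * x)))"
    by (rule summable_norm[OF dilation_series_summable[OF x]])
  also have "\<dots> \<le> (\<Sum>n. K * x powr (-\<alpha>) * real (Suc n) powr (-\<alpha>))"
    by (intro suminf_le dilation_series_summable[OF x] summable_mult[OF zeta_alpha_summable]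
        dilation_bound x allI)
  also have "\<dots> = K * x powr (-\<alpha>) * zeta_alpha"
    unfolding zeta_alpha_def by (rule suminf_mult[OF zeta_alpha_summable])
  finally show ?thesis by (simp add: algebra_simps)
qed

text \<open>Step (1) of the proof: if \<open>P\<phi>\<close> is again \<open>O(x^-\<alpha>)\<close>, then \<open>\<integral> \<phi> = 0\<close>, because
  \<open>(1/x) \<integral> \<phi> = \<Sum>\<^sub>n \<phi>(nx) - P\<phi>(x) = O(x^-\<alpha>)\<close>.\<close>

lemma muentz_decay_imp_integral_zero:
  assumes g: "\<And>x. x > 0 \<Longrightarrow> norm (g x) \<le> Kg * x powr (-\<alpha>)"
    and gP: "\<And>x. x > 0 \<Longrightarrow> g x = muentz \<phi> x"
  shows "integral {0..} \<phi> = 0"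
proof -
  define I where "I = integral {0..} \<phi>"
  define c where "c = Kg + K * zeta_alpha"
  have "\<forall>\<^sub>F x in at_top. norm I \<le> c * x powr (1 - \<alpha>)"
    using eventually_gt_at_top[of "0::real"]
  proof eventually_elim
    case (elim x)
    have eq: "of_real (1 / x) * I = (\<Sum>n. \<phi> (real (Suc n) * x)) - g x"
      using gP[OF elim] unfolding muentz_def I_def by simp
    have "norm I / x = norm (of_real (1 / x) * I)" using elim by (simp add: norm_mult norm_divide)
    also have "\<dots> = norm ((\<Sum>n. \<phi> (real (Suc n) * x)) - g x)" by (simp only: eq)
    also have "\<dots> \<le> norm (\<Sum>n. \<phi> (real (Suc n) * x)) + norm (g x)" by (rule norm_triangle_ineq4)
    also have "\<dots> \<le> c * x powr (-\<alpha>)"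
      using dilation_series_bound[OF elim] g[OF elim] by (simp add: c_def algebra_simps)
    finally have "norm I \<le> c * x powr (-\<alpha>) * x" using elim by (simp add: field_simps)
    also have "c * x powr (-\<alpha>) * x = c * x powr (1 - \<alpha>)"
      using elim powr_add[of x "-\<alpha>" 1] by simp
    finally show ?case .
  qed
  moreover have "((\<lambda>x. c * x powr (1 - \<alpha>)) \<longlongrightarrow> 0) at_top" using exponent by real_asymp
  ultimately have "norm I \<le> 0"
    by (intro tendsto_le[OF trivial_limit_at_top_linorder _ tendsto_const])
  then show ?thesis by (simp add: I_def)
qed

end

section \<open>Harmonic numbers\<close>

lemma harm_as_indicator_sum:
  fixes e u :: real assumes e: "e > 0"
  shows "(\<Sum>n<M. if u \<in> {real (Suc n) * e..} then inverse (of_nat (Suc n)) else 0) =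
         (harm (min M (nat \<lfloor>u / e\<rfloor>)) :: complex)"
proof -
  have iff: "u \<in> {real (Suc n) * e..} \<longleftrightarrow> n < nat \<lfloor>u / e\<rfloor>" for n
  proof -
    have "u \<in> {real (Suc n) * e..} \<longleftrightarrow> real (Suc n) \<le> u / e" using e by (auto simp: field_simps)
    also have "\<dots> \<longleftrightarrow> int (Suc n) \<le> \<lfloor>u / e\<rfloor>" by (simp add: le_floor_iff)
    also have "\<dots> \<longleftrightarrow> n < nat \<lfloor>u / e\<rfloor>" by linarith
    finally show ?thesis .
  qed
  have "(\<Sum>n<M. if u \<in> {real (Suc n) * e..} then inverse (of_nat (Suc n)) else (0::complex)) =
        (\<Sum>n\<in>{n\<in>{..<M}. n < nat \<lfloor>u / e\<rfloor>}. inverse (of_nat (Suc n)))"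
    by (simp only: iff sum.inter_filter[symmetric] finite_lessThan)
  also have "{n\<in>{..<M}. n < nat \<lfloor>u / e\<rfloor>} = {..<min M (nat \<lfloor>u / e\<rfloor>)}" by auto
  finally show ?thesis by (simp add: harm_altdef)
qed

lemma harm_le_1_plus_ln: "k > 0 \<Longrightarrow> harm k \<le> 1 + ln (real k)"
  using euler_mascheroni_sequence_decreasing[of 1 k] by (simp add: harm_altdef)

lemma euler_mascheroni_le_1: "euler_mascheroni \<le> (1::real)"
proof -
  have "euler_mascheroni \<le> harm 1 - ln (real (Suc 1)) + inverse (real (2 * 1))"
    using euler_mascheroni_bounds[of 1] by simp
  moreover have "harm 1 = (1::real)" by (simp add: harm_altdef)
  moreover have "2/3 \<le> ln (2::real)" by (rule ln2_ge_two_thirds)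
  ultimately show ?thesis by simp
qed

text \<open>The key asymptotics: \<open>H(\<lfloor>uN\<rfloor>) - ln N - \<gamma> \<longrightarrow> ln u\<close>, from \<open>H(k) - ln k \<longrightarrow> \<gamma>\<close>.\<close>

lemma harm_floor_minus_ln_tendsto:
  fixes u :: real assumes u: "u > 0"
  shows "(\<lambda>N. harm (nat \<lfloor>u * real (Suc N)\<rfloor>) - ln (real (Suc N)) - euler_mascheroni) \<longlonglongrightarrow> ln u"
proof -
  define m where "m N = u * real (Suc N)" for N
  define k where "k N = nat \<lfloor>m N\<rfloor>" for N
  have m_lim: "filterlim m at_top sequentially"
    unfolding m_def using u by real_asymp
  have k_lim: "filterlim k at_top sequentially"
    unfolding k_def
    by (rule filterlim_compose[OF filterlim_nat_sequentially filterlim_compose[OF filterlim_floor_sequentially m_lim]])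
  have A: "(\<lambda>N. harm (k N) - ln (real (k N))) \<longlonglongrightarrow> euler_mascheroni"
    by (rule filterlim_compose[OF euler_mascheroni_LIMSEQ k_lim])
  have mpos: "m N > 0" for N unfolding m_def using u by simp
  have B: "(\<lambda>N. real (k N) / m N) \<longlonglongrightarrow> 1"
  proof (rule tendsto_sandwich)
    have "1 - inverse (m N) \<le> real (k N) / m N" for N
    proof -
      have "real (k N) \<ge> m N - 1" unfolding k_def using mpos[of N] by linarith
      then have "(m N - 1) / m N \<le> real (k N) / m N" using mpos[of N] by (intro divide_right_mono) auto
      moreover have "(m N - 1) / m N = 1 - inverse (m N)" using mpos[of N] by (simp add: field_simps)
      ultimately show ?thesis by simp
    qed
    then show "\<forall>\<^sub>F N in sequentially. 1 - inverse (m N) \<le> real (k N) / m N" by simp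
    have "real (k N) \<le> m N" for N unfolding k_def using mpos[of N] by linarith
    then show "\<forall>\<^sub>F N in sequentially. real (k N) / m N \<le> 1" using mpos by (simp add: field_simps)
    show "(\<lambda>N. 1 - inverse (m N)) \<longlonglongrightarrow> 1"
      using tendsto_diff[OF tendsto_const tendsto_inverse_0_at_top[OF m_lim], of 1] by simp
  qed simp
  have C: "(\<lambda>N. ln (real (k N) / m N)) \<longlonglongrightarrow> 0"
    using tendsto_ln[OF B] by simp
  have D: "(\<lambda>N. (harm (k N) - ln (real (k N)) - euler_mascheroni) + ln (real (k N) / m N) + ln u) \<longlonglongrightarrow> ln u"
    using tendsto_add[OF tendsto_add[OF tendsto_diff[OF A tendsto_const[of euler_mascheroni]] C]
        tendsto_const[of "ln u"]] by simp
  have "\<forall>\<^sub>F N in sequentially. (harm (k N) - ln (real (k N)) - euler_mascheroni) + ln (real (k N) / m N) + ln u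
        = harm (nat \<lfloor>u * real (Suc N)\<rfloor>) - ln (real (Suc N)) - euler_mascheroni"
    using filterlim_at_top[THEN iffD1, OF k_lim, rule_format, of 1]
  proof eventually_elim
    case (elim N)
    then have "ln (real (k N) / m N) = ln (real (k N)) - ln u - ln (real (Suc N))"
      using mpos[of N] u by (simp add: ln_div m_def ln_mult)
    then show ?case by (simp add: k_def m_def)
  qed
  then show ?thesis by (rule Lim_transform_eventually[OF D])
qed

text \<open>The uniform bound that makes dominated convergence applicable.\<close>

lemma harm_floor_minus_ln_bound:
  fixes u :: real assumes u: "u > 0"
  shows "\<bar>harm (nat \<lfloor>u * real (Suc N)\<rfloor>) - ln (real (Suc N)) - euler_mascheroni\<bar> \<le> \<bar>ln u\<bar> + 2"
proof -
  define m where "m = u * real (Suc N)"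
  define k where "k = nat \<lfloor>m\<rfloor>"
  have mpos: "m > 0" unfolding m_def using u by simp
  have lm: "ln m = ln u + ln (real (Suc N))" unfolding m_def using u by (simp add: ln_mult)
  have g0: "euler_mascheroni \<ge> (0::real)" using euler_mascheroni_pos by simp
  have g1: "euler_mascheroni \<le> (1::real)" by (rule euler_mascheroni_le_1)
  have lN: "ln (real (Suc N)) \<ge> 0" by simp
  show ?thesis
  proof (cases "k = 0")
    case True
    then have "ln m < 0" using mpos unfolding k_def by simp
    then have "ln (real (Suc N)) \<le> \<bar>ln u\<bar>" using lm by linarith
    moreover have "harm (nat \<lfloor>u * real (Suc N)\<rfloor>) = (0::real)"
      using True by (simp add: k_def m_def harm_altdef)
    ultimately show ?thesis using lN g0 g1 abs_ge_zero[of "ln u"] by (simp only: abs_le_iff) linarith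
  next
    case False
    have h1: "harm k - ln (real k) \<ge> 0" using False by (intro euler_mascheroni_sequence_nonneg) auto
    have h2: "harm k - ln (real k) \<le> 1" using harm_le_1_plus_ln[of k] False by simp
    have km: "real k \<le> m" "m < real k + 1" unfolding k_def using mpos by linarith+
    have kp: "real k > 0" using False by simp
    have d1: "ln m - ln (real k) \<ge> 0" using km kp by simp
    have "ln m - ln (real k) = ln (m / real k)" using kp mpos by (simp add: ln_div)
    also have "\<dots> \<le> m / real k - 1" using kp mpos by (intro ln_le_minus_one) simp
    also have "\<dots> \<le> 1" using km kp by (simp add: field_simps)
    finally have d2: "ln m - ln (real k) \<le> 1" .
    have "harm k - ln (real (Suc N)) - euler_mascheroni
      = (harm k - ln (real k)) - (ln m - ln (real k)) + ln u - euler_mascheroni"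
      using lm by simp
    then show ?thesis unfolding k_def[symmetric] m_def[symmetric]
      using h1 h2 d1 d2 g0 g1 by linarith
  qed
qed

lemma integral_atLeast_inverse_tendsto:
  fixes G :: "real \<Rightarrow> complex"
  assumes G: "G absolutely_integrable_on {0<..}"
  shows "(\<lambda>N. integral {1 / real (Suc N)..} G) \<longlonglongrightarrow> integral {0<..} G"
proof -
  define e where "e N = 1 / real (Suc N)" for N
  define R where "R N u = (if u \<in> {e N..} then G u else 0)" for N u
  have sub: "{e N..} \<subseteq> {0<..}" for N
    using less_le_trans[of 0 "e N"] by (auto simp: e_def)
  then have sN: "{e N..} \<inter> {0<..} = {e N..}" for N by auto
  have "G integrable_on {e N..}" for N
    using set_integrable_subset[OF G _ sub] by (auto simp: absolutely_integrable_on_def)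
  then have Rint: "R N integrable_on {0<..}" for N
    unfolding R_def by (subst integrable_restrict_Int, subst sN)
  have Rintegral: "integral {0<..} (R N) = integral {e N..} G" for N
    unfolding R_def by (subst integral_restrict_Int, subst sN) (rule refl)
  have Gnorm: "(\<lambda>u. norm (G u)) integrable_on {0<..}" using G by (auto simp: absolutely_integrable_on_def)
  have Rle: "norm (R N u) \<le> norm (G u)" for N u by (simp add: R_def)
  have Rconv: "(\<lambda>N. R N u) \<longlonglongrightarrow> G u" if u: "u \<in> {0<..}" for u
  proof (rule tendsto_eventually)
    have "e \<longlonglongrightarrow> 0" unfolding e_def by real_asymp
    then have "\<forall>\<^sub>F N in sequentially. e N < u" using u by (auto simp: order_tendsto_iff)
    then show "\<forall>\<^sub>F N in sequentially. R N u = G u"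
      by eventually_elim (simp add: R_def)
  qed
  show ?thesis
    using dominated_convergence(2)[OF Rint Gnorm Rle Rconv] by (simp add: Rintegral e_def)
qed

section \<open>The logarithmic moment identity\<close>

context decaying
begin

lemma dilation_abs_integrable:
  "\<epsilon> > 0 \<Longrightarrow> (\<lambda>t. \<phi> (real (Suc n) * t)) absolutely_integrable_on {\<epsilon>..}"
  by (rule integral_dilation(1)[OF _ abs_integrable_atLeast]) auto

lemma dilation_integral:
  "\<epsilon> > 0 \<Longrightarrow> integral {\<epsilon>..} (\<lambda>t. \<phi> (real (Suc n) * t)) = integral {real (Suc n) * \<epsilon>..} \<phi> / real (Suc n)"
  by (rule integral_dilation(2)[OF _ abs_integrable_atLeast]) auto

text \<open>Termwise integration of \<open>G(t) = \<Sum>\<^sub>n \<phi>(nt)\<close> over \<open>[\<epsilon>,\<infinity>)\<close>, dominated by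
  \<open>K \<zeta>(\<alpha>) t^-\<alpha>\<close>.\<close>

lemma integral_dilation_series:
  fixes G :: "real \<Rightarrow> complex"
  assumes G: "\<And>t. t > 0 \<Longrightarrow> G t = (\<Sum>n. \<phi> (real (Suc n) * t))"
    and e: "\<epsilon> > 0"
  shows "(\<lambda>n. integral {real (Suc n) * \<epsilon>..} \<phi> / real (Suc n)) sums integral {\<epsilon>..} G"
proof -
  define F where "F M t = (\<Sum>n<M. \<phi> (real (Suc n) * t))" for M t
  define h where "h t = K * zeta_alpha * t powr (-\<alpha>)" for t
  have Fint: "F M integrable_on {\<epsilon>..}" for M
    unfolding F_def
    by (rule integrable_sum) (use dilation_abs_integrable[OF e] in \<open>auto simp: absolutely_integrable_on_def\<close>)
  have hint: "h integrable_on {\<epsilon>..}"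
    using has_integral_powr_to_inf[of "-\<alpha>" \<epsilon>] exponent e
      integrable_on_mult_right[of "\<lambda>t. t powr (-\<alpha>)" "{\<epsilon>..}" "K * zeta_alpha"]
    unfolding h_def by (auto simp: integrable_on_def)
  have le: "norm (F M t) \<le> h t" if t: "t \<in> {\<epsilon>..}" for M t
  proof -
    have tp: "t > 0" using t e by auto
    have "norm (F M t) \<le> (\<Sum>n<M. norm (\<phi> (real (Suc n) * t)))"
      unfolding F_def by (rule norm_sum)
    also have "\<dots> \<le> (\<Sum>n<M. K * t powr (-\<alpha>) * real (Suc n) powr (-\<alpha>))"
      by (intro sum_mono dilation_bound tp)
    also have "\<dots> = K * t powr (-\<alpha>) * (\<Sum>n<M. real (Suc n) powr (-\<alpha>))"
      by (simp add: sum_distrib_left)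
    also have "\<dots> \<le> K * t powr (-\<alpha>) * zeta_alpha"
      unfolding zeta_alpha_def using K_nonneg
      by (intro mult_left_mono sum_le_suminf[OF zeta_alpha_summable]) auto
    finally show ?thesis by (simp add: h_def algebra_simps)
  qed
  have conv: "(\<lambda>M. F M t) \<longlonglongrightarrow> G t" if t: "t \<in> {\<epsilon>..}" for t
  proof -
    have tp: "t > 0" using t e by auto
    have "summable (\<lambda>n. \<phi> (real (Suc n) * t))"
      by (rule summable_norm_cancel[OF dilation_series_summable[OF tp]])
    then show ?thesis using G[OF tp] unfolding F_def by (simp add: summable_sums sums_def[symmetric])
  qed
  have "integral {\<epsilon>..} (F M) = (\<Sum>n<M. integral {real (Suc n) * \<epsilon>..} \<phi> / real (Suc n))" for M
    unfolding F_def using dilation_abs_integrable[OF e] dilation_integral[OF e]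
    by (subst integral_sum) (auto simp: absolutely_integrable_on_def)
  then show ?thesis
    using dominated_convergence(2)[OF Fint hint le conv] unfolding sums_def by simp
qed

text \<open>Interchanging sum and integral the other way: \<open>\<Sum>\<^sub>n (1/n) \<integral>\<^sub>n\<^sub>\<epsilon>\<^sup>\<infinity> \<phi>\<close> equals
  \<open>\<integral> \<phi>(u) H(\<lfloor>u/\<epsilon>\<rfloor>) du\<close>, dominated by \<open>|\<phi>(u)| (1 + |ln u| + |ln \<epsilon>|)\<close>.\<close>

lemma harmonic_weight_sums:
  assumes e: "e > 0"
  shows "(\<lambda>n. integral {real (Suc n) * e..} \<phi> / real (Suc n)) sums
           integral {0<..} (\<lambda>u. \<phi> u * of_real (harm (nat \<lfloor>u / e\<rfloor>)))"
    and "(\<lambda>u. \<phi> u * of_real (harm (nat \<lfloor>u / e\<rfloor>))) integrable_on {0<..}"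
proof -
  define P where "P M u = (\<Sum>n<M. if u \<in> {real (Suc n) * e..} then \<phi> u * inverse (of_nat (Suc n)) else 0)" for M u
  define h where "h u = norm (\<phi> u * of_real (ln u)) + (1 + \<bar>ln e\<bar>) * norm (\<phi> u)" for u
  have Pe: "P M u = \<phi> u * harm (min M (nat \<lfloor>u / e\<rfloor>))" for M u
  proof -
    have "P M u = \<phi> u * (\<Sum>n<M. if u \<in> {real (Suc n) * e..} then inverse (of_nat (Suc n)) else 0)"
      unfolding P_def sum_distrib_left by (rule sum.cong) auto
    then show ?thesis using harm_as_indicator_sum[OF e] by simp
  qed
  have sub: "{real (Suc n) * e..} \<inter> {0<..} = {real (Suc n) * e..}" for n
    using e by (auto intro: less_le_trans[of 0 "real (Suc n) * e"])
  have term_int: "(\<lambda>u. if u \<in> {real (Suc n) * e..} then \<phi> u * inverse (of_nat (Suc n)) else 0) integrable_on {0<..}" for n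
    using abs_integrable_atLeast[of "real (Suc n) * e"] e
    by (subst integrable_restrict_Int, subst sub)
       (auto simp: absolutely_integrable_on_def intro: integrable_on_mult_left)
  have term_integral: "integral {0<..} (\<lambda>u. if u \<in> {real (Suc n) * e..} then \<phi> u * inverse (of_nat (Suc n)) else 0)
       = integral {real (Suc n) * e..} \<phi> / real (Suc n)" for n
    by (subst integral_restrict_Int, subst sub) (simp add: divide_inverse)
  have Pint: "P M integrable_on {0<..}" for M
    unfolding P_def by (rule integrable_sum) (use term_int in auto)
  have hint: "h integrable_on {0<..}"
    using ln_abs_integrable abs_integrable unfolding h_def
    by (intro integrable_add integrable_on_mult_right) (auto simp: absolutely_integrable_on_def)
  have le: "norm (P M u) \<le> h u" if u: "u \<in> {0<..}" for M u
  proof -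
    define k where "k = nat \<lfloor>u / e\<rfloor>"
    have "norm (P M u) = norm (\<phi> u) * harm (min M k)"
      unfolding Pe k_def by (simp add: norm_mult norm_harm)
    also have "\<dots> \<le> norm (\<phi> u) * harm k" by (intro mult_left_mono harm_mono) auto
    also have "harm k \<le> 1 + \<bar>ln u\<bar> + \<bar>ln e\<bar>"
    proof (cases "k = 0")
      case True then show ?thesis by (simp add: harm_altdef)
    next
      case False
      then have "harm k \<le> 1 + ln (real k)" by (intro harm_le_1_plus_ln) auto
      also have "real k \<le> u / e" unfolding k_def using u e by (simp add: floor_divide_lower)
      then have "ln (real k) \<le> ln (u / e)" using False by (intro ln_mono) auto
      also have "ln (u / e) = ln u - ln e" using u e by (simp add: ln_div)
      finally show ?thesis by linarith
    qed
    then have "norm (\<phi> u) * harm k \<le> norm (\<phi> u) * (1 + \<bar>ln u\<bar> + \<bar>ln e\<bar>)"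
      by (intro mult_left_mono) auto
    also have "\<dots> = h u" unfolding h_def by (simp add: norm_mult algebra_simps)
    finally show ?thesis by simp
  qed
  have conv: "(\<lambda>M. P M u) \<longlonglongrightarrow> \<phi> u * of_real (harm (nat \<lfloor>u / e\<rfloor>))" if "u \<in> {0<..}" for u
  proof (rule tendsto_eventually)
    show "\<forall>\<^sub>F M in sequentially. P M u = \<phi> u * of_real (harm (nat \<lfloor>u / e\<rfloor>))"
      using eventually_ge_at_top[of "nat \<lfloor>u / e\<rfloor>"]
      by eventually_elim (simp add: Pe of_real_harm min_absorb2)
  qed
  have "integral {0<..} (P M) = (\<Sum>n<M. integral {real (Suc n) * e..} \<phi> / real (Suc n))" for M
    unfolding P_def by (subst integral_sum) (use term_int term_integral in auto)
  then show "(\<lambda>n. integral {real (Suc n) * e..} \<phi> / real (Suc n)) sums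
           integral {0<..} (\<lambda>u. \<phi> u * of_real (harm (nat \<lfloor>u / e\<rfloor>)))"
    using dominated_convergence(2)[OF Pint hint le conv] unfolding sums_def by simp
  show "(\<lambda>u. \<phi> u * of_real (harm (nat \<lfloor>u / e\<rfloor>))) integrable_on {0<..}"
    by (rule dominated_convergence(1)[OF Pint hint le conv])
qed

lemma renormalised_harmonic_weight_tendsto:
  "(\<lambda>N. integral {0<..} (\<lambda>u. \<phi> u * of_real (harm (nat \<lfloor>u * real (Suc N)\<rfloor>) - ln (real (Suc N)) - euler_mascheroni)))
     \<longlonglongrightarrow> integral {0<..} (\<lambda>u. \<phi> u * of_real (ln u))"
proof -
  define Q where "Q N u = \<phi> u * of_real (harm (nat \<lfloor>u * real (Suc N)\<rfloor>) - ln (real (Suc N)) - euler_mascheroni)" for N u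
  define h where "h u = norm (\<phi> u * of_real (ln u)) + 2 * norm (\<phi> u)" for u
  have Qint: "Q N integrable_on {0<..}" for N
  proof -
    have "(\<lambda>u. \<phi> u * of_real (harm (nat \<lfloor>u * real (Suc N)\<rfloor>))) integrable_on {0<..}"
      using harmonic_weight_sums(2)[of "1 / real (Suc N)"] by simp
    then have "(\<lambda>u. \<phi> u * of_real (harm (nat \<lfloor>u * real (Suc N)\<rfloor>))
        - \<phi> u * of_real (ln (real (Suc N)) + euler_mascheroni)) integrable_on {0<..}"
      by (intro integrable_diff integrable_on_mult_left integrable)
    then show ?thesis by (rule integrable_eq) (simp add: Q_def algebra_simps)
  qed
  have hint: "h integrable_on {0<..}"
    using ln_abs_integrable abs_integrable unfolding h_def
    by (intro integrable_add integrable_on_mult_right) (auto simp: absolutely_integrable_on_def)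
  have le: "norm (Q N u) \<le> h u" if u: "u \<in> {0<..}" for N u
  proof -
    have "norm (Q N u) = norm (\<phi> u) * \<bar>harm (nat \<lfloor>u * real (Suc N)\<rfloor>) - ln (real (Suc N)) - euler_mascheroni\<bar>"
      by (simp only: Q_def norm_mult norm_of_real)
    also have "\<dots> \<le> norm (\<phi> u) * (\<bar>ln u\<bar> + 2)"
      using harm_floor_minus_ln_bound[of u N] u by (intro mult_left_mono) auto
    also have "\<dots> = h u" by (simp add: h_def norm_mult algebra_simps)
    finally show ?thesis .
  qed
  have conv: "(\<lambda>N. Q N u) \<longlonglongrightarrow> \<phi> u * of_real (ln u)" if u: "u \<in> {0<..}" for u
    unfolding Q_def using u
    by (intro tendsto_mult tendsto_const tendsto_of_real harm_floor_minus_ln_tendsto) auto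
  show ?thesis
    using dominated_convergence(2)[OF Qint hint le conv] unfolding Q_def .
qed

text \<open>Both sides are limits of \<open>\<integral>\<^sub>1\<^sub>/\<^sub>N\<^sup>\<infinity> G\<close>, which equals the
  renormalised harmonic-weight integral because subtracting \<open>(ln N + \<gamma>) \<integral> \<phi> = 0\<close> is free.\<close>

lemma log_moment_identity:
  fixes G :: "real \<Rightarrow> complex"
  assumes I0: "integral {0<..} \<phi> = 0"
    and Gabs: "G absolutely_integrable_on {0<..}"
    and G: "\<And>t. t > 0 \<Longrightarrow> G t = (\<Sum>n. \<phi> (real (Suc n) * t))"
  shows "integral {0<..} G = integral {0<..} (\<lambda>t. \<phi> t * of_real (ln t))"
proof -
  define H where "H N u = \<phi> u * of_real (harm (nat \<lfloor>u / (1 / real (Suc N))\<rfloor>))" for N u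
  have "integral {1 / real (Suc N)..} G
      = integral {0<..} (\<lambda>u. \<phi> u * of_real (harm (nat \<lfloor>u * real (Suc N)\<rfloor>) - ln (real (Suc N)) - euler_mascheroni))"
    for N
  proof -
    have e: "1 / real (Suc N) > 0" by simp
    have "integral {1 / real (Suc N)..} G = integral {0<..} (H N)"
      using sums_unique2[OF integral_dilation_series[OF G e] harmonic_weight_sums(1)[OF e]]
      unfolding H_def by simp
    also have "\<dots> = integral {0<..} (H N) - integral {0<..} (\<lambda>u. \<phi> u * of_real (ln (real (Suc N)) + euler_mascheroni))"
      using I0 by simp
    also have "\<dots> = integral {0<..} (\<lambda>u. H N u - \<phi> u * of_real (ln (real (Suc N)) + euler_mascheroni))"
      using integral_diff[OF harmonic_weight_sums(2)[OF e] integrable_on_mult_left[OF integrable]]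
      unfolding H_def by simp
    finally show ?thesis by (simp add: H_def algebra_simps)
  qed
  then have "(\<lambda>N. integral {0<..} (\<lambda>u. \<phi> u * of_real (harm (nat \<lfloor>u * real (Suc N)\<rfloor>) - ln (real (Suc N)) - euler_mascheroni)))
      \<longlonglongrightarrow> integral {0<..} G"
    using integral_atLeast_inverse_tendsto[OF Gabs] by simp
  then show ?thesis using renormalised_harmonic_weight_tendsto LIMSEQ_unique by blast
qed

lemma voronoi_integral_eq:
  fixes g :: "real \<Rightarrow> complex"
  assumes I0: "integral {0..} \<phi> = 0"
    and gabs: "g absolutely_integrable_on {0..}"
    and g: "\<And>t. t > 0 \<Longrightarrow> g t = (\<Sum>n. \<phi> (real (Suc n) * t))"
    and x: "x > 0"
  shows "integral {0..} (\<lambda>y. \<phi> (x * y) * complex_of_real (ln y + 2 * euler_mascheroni))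
           = complex_of_real (1 / x) * integral {0..} g"
proof -
  interpret D: decaying "\<lambda>y. \<phi> (x * y)" "K * max 1 (x powr (-\<alpha>))" \<alpha>
    by (rule dilation_decaying[OF x])
  have abs0: "\<phi> absolutely_integrable_on {x * 0..}"
    using abs_integrable absolutely_integrable_atLeast_0_greaterThan[of \<phi>] by simp
  have D0: "integral {0<..} (\<lambda>y. \<phi> (x * y)) = 0"
    using integral_dilation(2)[OF x abs0] I0 by (simp add: integral_atLeast_0_greaterThan)
  have Gabs: "(\<lambda>t. g (x * t)) absolutely_integrable_on {0<..}"
    using integral_dilation(1)[OF x, where f=g and a=0] gabs
    by (simp add: absolutely_integrable_atLeast_0_greaterThan)
  have "integral {0..} (\<lambda>y. \<phi> (x * y) * of_real (ln y + 2 * euler_mascheroni))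
      = integral {0<..} (\<lambda>y. \<phi> (x * y) * of_real (ln y) + \<phi> (x * y) * of_real (2 * euler_mascheroni))"
    by (simp add: integral_atLeast_0_greaterThan distrib_left)
  also have "\<dots> = integral {0<..} (\<lambda>y. \<phi> (x * y) * of_real (ln y))
      + integral {0<..} (\<lambda>y. \<phi> (x * y)) * of_real (2 * euler_mascheroni)"
    using integral_add[OF D.ln_integrable integrable_on_mult_left[OF D.integrable]] by simp
  also have "\<dots> = integral {0<..} (\<lambda>t. g (x * t))"
  proof -
    have "g (x * t) = (\<Sum>n. \<phi> (x * (real (Suc n) * t)))" if "t > 0" for t
      using g[of "x * t"] x that by (simp add: algebra_simps)
    then show ?thesis using D.log_moment_identity[OF D0 Gabs] D0 by simp
  qed
  also have "\<dots> = integral {0..} g / x"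
    using integral_dilation(2)[OF x, where f=g and a=0] gabs by (simp add: integral_atLeast_0_greaterThan)
  finally show ?thesis by (simp add: divide_inverse mult.commute)
qed

end

section \<open>Grouping a double series by products\<close>

text \<open>The pairs \<open>(m, n)\<close> (shifted by one) with \<open>m n = k + 1\<close>; there are \<open>d(k + 1)\<close> of them,
  and they partition \<open>\<nat> \<times> \<nat>\<close>.\<close>

definition factor_pairs :: "nat \<Rightarrow> (nat \<times> nat) set" where
  "factor_pairs k = {p. Suc (fst p) * Suc (snd p) = Suc k}"

lemma finite_factor_pairs: "finite (factor_pairs k)"
proof (rule finite_subset[of _ "{..k} \<times> {..k}"])
  show "factor_pairs k \<subseteq> {..k} \<times> {..k}"
  proof
    fix p assume "p \<in> factor_pairs k"
    then have e: "Suc (fst p) * Suc (snd p) = Suc k" by (simp add: factor_pairs_def)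
    have "Suc (fst p) \<le> Suc k" using e by (metis le_add1 mult_Suc_right)
    moreover have "Suc (snd p) \<le> Suc k" using e by (metis le_add1 mult_Suc)
    ultimately show "p \<in> {..k} \<times> {..k}" by (cases p) auto
  qed
qed simp

lemma card_factor_pairs: "card (factor_pairs k) = divisor_count (Suc k)"
proof -
  have "bij_betw (\<lambda>p. Suc (fst p)) (factor_pairs k) {d. d dvd Suc k}"
  proof (rule bij_betw_imageI)
    show "inj_on (\<lambda>p. Suc (fst p)) (factor_pairs k)"
    proof (rule inj_onI)
      fix p q assume p: "p \<in> factor_pairs k" and q: "q \<in> factor_pairs k" and e: "Suc (fst p) = Suc (fst q)"
      have "Suc (fst p) * Suc (snd p) = Suc (fst p) * Suc (snd q)"
        using p q e by (simp add: factor_pairs_def)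
      then have "Suc (snd p) = Suc (snd q)" by (metis Zero_not_Suc mult_left_cancel)
      then have "snd p = snd q" by simp
      with e show "p = q" by (simp add: prod_eq_iff)
    qed
    show "(\<lambda>p. Suc (fst p)) ` factor_pairs k = {d. d dvd Suc k}"
    proof (rule set_eqI, rule iffI)
      fix d assume "d \<in> (\<lambda>p. Suc (fst p)) ` factor_pairs k"
      then obtain p where "p \<in> factor_pairs k" "d = Suc (fst p)" by blast
      then have "Suc k = d * Suc (snd p)" by (simp add: factor_pairs_def)
      then show "d \<in> {d. d dvd Suc k}" by (simp add: dvdI)
    next
      fix d assume "d \<in> {d. d dvd Suc k}"
      then obtain q where q: "Suc k = d * q" by auto
      then have "d > 0" and "q > 0" by (auto intro: gr0I)
      then have "Suc (d - 1) = d" and "Suc (q - 1) = q" by simp_all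
      then have "(d - 1, q - 1) \<in> factor_pairs k" and "d = Suc (fst (d - 1, q - 1))"
        using q unfolding factor_pairs_def mem_Collect_eq fst_conv snd_conv by simp_all
      then show "d \<in> (\<lambda>p. Suc (fst p)) ` factor_pairs k" by blast
    qed
  qed
  then show ?thesis unfolding divisor_count_def by (rule bij_betw_same_card)
qed

lemma bij_snd_factor_pairs: "bij_betw snd (Sigma UNIV factor_pairs) UNIV"
proof (rule bij_betw_imageI)
  show "inj_on snd (Sigma UNIV factor_pairs)"
    by (rule inj_onI) (auto simp: factor_pairs_def)
  show "snd ` Sigma UNIV factor_pairs = UNIV"
  proof (rule set_eqI, rule iffI)
    fix p :: "nat \<times> nat"
    have "(Suc (fst p) * Suc (snd p) - 1, p) \<in> Sigma UNIV factor_pairs" by (simp add: factor_pairs_def)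
    then show "p \<in> snd ` Sigma UNIV factor_pairs" by force
  qed simp
qed

lemma suminf_eq_infsum:
  fixes f :: "nat \<Rightarrow> complex"
  assumes "f summable_on UNIV" shows "suminf f = infsum f UNIV"
  using assms by (metis has_sum_imp_sums has_sum_infsum sums_unique)

text \<open>The product array \<open>F(m n)\<close> is absolutely summable when \<open>|F(k)| \<le> C k^-\<alpha>\<close>,
  \<open>\<alpha> > 1\<close>, since it is then dominated by the product of two convergent series.\<close>

lemma product_array_abs_summable:
  fixes F :: "nat \<Rightarrow> complex" and C \<alpha> :: real
  assumes a: "\<alpha> > 1" and bd: "\<And>k. k \<ge> 1 \<Longrightarrow> norm (F k) \<le> C * real k powr (-\<alpha>)"
  shows "(\<lambda>p. norm (F (Suc (fst p) * Suc (snd p)))) summable_on UNIV"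
proof -
  define A where "A p = F (Suc (fst p) * Suc (snd p))" for p
  define w where "w n = real (Suc n) powr (-\<alpha>)" for n
  have C0: "C \<ge> 0" using bd[of 1] by (auto intro: order_trans[OF norm_ge_zero])
  have w0: "w n \<ge> 0" for n by (simp add: w_def)
  have "summable w"
    using summable_ignore_initial_segment[of "\<lambda>n. real n powr (-\<alpha>)" 1] summable_real_powr_iff a
    unfolding w_def by simp
  then have wsum: "w summable_on UNIV" using summable_on_UNIV_nonneg_real_iff[of w] w0 by simp
  have Ab: "norm (A (m, n)) \<le> (C * w m) * w n" for m n
  proof -
    have "norm (A (m, n)) \<le> C * real (Suc m * Suc n) powr (-\<alpha>)"
      unfolding A_def using bd[of "Suc m * Suc n"] by simp
    also have "real (Suc m * Suc n) powr (-\<alpha>) = w m * w n"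
      unfolding w_def by (simp only: of_nat_mult powr_mult of_nat_0_le_iff)
    finally show ?thesis by (simp add: algebra_simps)
  qed
  have winf: "infsum w UNIV \<ge> 0" using w0 by (intro infsum_nonneg) auto
  have inner_le: "(\<Sum>\<^sub>\<infinity>n. norm (A (m, n))) \<le> (C * infsum w UNIV) * w m"
    and inner_abs: "(\<lambda>n. norm (A (m, n))) summable_on UNIV" for m
  proof -
    have cw: "(\<lambda>n. (C * w m) * w n) summable_on UNIV" by (rule summable_on_cmult_right[OF wsum])
    then have "(\<lambda>n. norm ((C * w m) * w n)) summable_on UNIV" using C0 w0 by simp
    then show "(\<lambda>n. norm (A (m, n))) summable_on UNIV"
    proof (rule Infinite_Sum.abs_summable_on_comparison_test)
      show "norm (A (m, n)) \<le> norm ((C * w m) * w n)" for n using Ab[of m n] C0 w0 by simp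
    qed
    then have "(\<Sum>\<^sub>\<infinity>n. norm (A (m, n))) \<le> (\<Sum>\<^sub>\<infinity>n. (C * w m) * w n)"
      using cw Ab by (intro infsum_mono) auto
    also have "\<dots> = C * infsum w UNIV * w m" by (subst infsum_cmult_right') (simp add: algebra_simps)
    finally show "(\<Sum>\<^sub>\<infinity>n. norm (A (m, n))) \<le> (C * infsum w UNIV) * w m" .
  qed
  have "(\<lambda>m. (C * infsum w UNIV) * w m) summable_on UNIV" by (rule summable_on_cmult_right[OF wsum])
  then have "(\<lambda>m. norm ((C * infsum w UNIV) * w m)) summable_on UNIV" using C0 w0 winf by simp
  then have "(\<lambda>m. norm (\<Sum>\<^sub>\<infinity>n. norm (A (m, n)))) summable_on UNIV"
  proof (rule Infinite_Sum.abs_summable_on_comparison_test)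
    fix m
    have "(\<Sum>\<^sub>\<infinity>n. norm (A (m, n))) \<ge> 0" by (intro infsum_nonneg) auto
    then show "norm (\<Sum>\<^sub>\<infinity>n. norm (A (m, n))) \<le> norm ((C * infsum w UNIV) * w m)"
      using inner_le[of m] C0 w0[of m] winf by simp
  qed
  then have "(\<lambda>p. norm (A p)) summable_on Sigma UNIV (\<lambda>_. UNIV)"
    using inner_abs by (subst Infinite_Sum.abs_summable_on_Sigma_iff) auto
  then show ?thesis by (simp add: A_def)
qed

text \<open>Step (2): \<open>\<Sum>\<^sub>m \<Sum>\<^sub>n F(m n) = \<Sum>\<^sub>k d(k) F(k)\<close> for \<open>|F(k)| \<le> C k^-\<alpha>\<close>, \<open>\<alpha> > 1\<close>:
  sum the absolutely summable array once by rows and once along the fibres of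
  \<open>(m, n) \<mapsto> m n\<close>.\<close>

lemma double_series_divisor_sum:
  fixes F :: "nat \<Rightarrow> complex" and C \<alpha> :: real
  assumes a: "\<alpha> > 1" and bd: "\<And>k. k \<ge> 1 \<Longrightarrow> norm (F k) \<le> C * real k powr (-\<alpha>)"
  shows "(\<Sum>m. \<Sum>n. F (Suc m * Suc n)) = (\<Sum>k. of_nat (divisor_count (Suc k)) * F (Suc k))"
proof -
  define A where "A p = F (Suc (fst p) * Suc (snd p))" for p
  have Asum: "(\<lambda>(m, n). A (m, n)) summable_on Sigma UNIV (\<lambda>_. UNIV)"
    using abs_summable_summable[OF product_array_abs_summable[OF a bd]]
    by (simp add: A_def case_prod_unfold)
  have rows: "(\<lambda>n. A (m, n)) summable_on UNIV" for m
    using summable_on_SigmaD1[of "\<lambda>m n. A (m, n)", OF Asum] by simp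
  have fibres: "(\<lambda>(k, p). A p) summable_on Sigma UNIV factor_pairs"
    using summable_on_reindex_bij_betw[OF bij_snd_factor_pairs, of A] Asum
    by (simp add: case_prod_unfold)
  have "(\<Sum>m. \<Sum>n. F (Suc m * Suc n)) = (\<Sum>m. infsum (\<lambda>n. A (m, n)) UNIV)"
    using suminf_eq_infsum[OF rows] by (simp add: A_def)
  also have "\<dots> = infsum A UNIV"
    using suminf_eq_infsum summable_on_Sigma_banach[OF Asum] infsum_Sigma'_banach[OF Asum] by simp
  also have "\<dots> = infsum (\<lambda>k. infsum A (factor_pairs k)) UNIV"
    using infsum_reindex_bij_betw[OF bij_snd_factor_pairs, of A] infsum_Sigma'_banach[OF fibres]
    by (simp add: case_prod_unfold)
  also have "\<dots> = (\<Sum>k. of_nat (divisor_count (Suc k)) * F (Suc k))"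
  proof -
    have "infsum A (factor_pairs k) = of_nat (divisor_count (Suc k)) * F (Suc k)" for k
    proof -
      have "infsum A (factor_pairs k) = sum (\<lambda>_. F (Suc k)) (factor_pairs k)"
        using finite_factor_pairs by (simp add: A_def factor_pairs_def)
      then show ?thesis by (simp add: card_factor_pairs)
    qed
    moreover have "(\<lambda>k. infsum A (factor_pairs k)) summable_on UNIV"
      using summable_on_Sigma_banach[OF fibres] by simp
    ultimately show ?thesis using suminf_eq_infsum by simp
  qed
  finally show ?thesis .
qed

lemma (in decaying) iterated_dilation_series:
  assumes x: "x > 0"
  shows "(\<Sum>m. \<Sum>n. \<phi> (real (Suc n) * (real (Suc m) * x)))
       = (\<Sum>k. of_nat (divisor_count (Suc k)) * \<phi> (real (Suc k) * x))"
proof -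
  have "norm (\<phi> (real k * x)) \<le> (K * x powr (-\<alpha>)) * real k powr (-\<alpha>)" if "k \<ge> 1" for k
    using decay[of "real k * x"] that x by (simp add: powr_mult algebra_simps)
  from double_series_divisor_sum[OF exponent this] show ?thesis
    by (simp add: algebra_simps)
qed

theorem corollary2:
  fixes f :: "real \<Rightarrow> complex" and \<alpha> :: real
  assumes "\<alpha> > 1"
    and "f \<in> M_class \<alpha>"
    and "\<exists>g \<in> M_class \<alpha>. \<forall>x>0. g x = muentz f x"
  shows "\<forall>x>0. voronoi f x = muentz (muentz f) x"
proof (intro allI impI)
  fix x :: real assume x: "x > 0"
  obtain g where gM: "g \<in> M_class \<alpha>" and gP: "\<And>x. x > 0 \<Longrightarrow> g x = muentz f x"
    using assms(3) by blast
  obtain Kf where F: "decaying f Kf \<alpha>" using M_class_decaying[OF assms(2,1)] .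
  obtain Kg where G: "decaying g Kg \<alpha>" using M_class_decaying[OF gM assms(1)] .
  have I0: "integral {0..} f = 0"
    by (rule decaying.muentz_decay_imp_integral_zero[OF F decaying.decay[OF G] gP])
  then have Pf: "muentz f y = (\<Sum>n. f (real (Suc n) * y))" for y
    by (simp add: muentz_def)
  have gabs: "g absolutely_integrable_on {0..}"
    using decaying.abs_integrable[OF G] absolutely_integrable_atLeast_0_greaterThan by blast
  have "integral {0..} (muentz f) = integral {0..} g"
    by (simp only: integral_atLeast_0_greaterThan) (rule integral_cong, simp add: gP)
  then have "integral {0..} (\<lambda>y. f (x * y) * complex_of_real (ln y + 2 * euler_mascheroni))
      = complex_of_real (1 / x) * integral {0..} (muentz f)"
    using decaying.voronoi_integral_eq[OF F I0 gabs _ x] gP Pf by simp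
  moreover have "(\<Sum>m. muentz f (real (Suc m) * x))
      = (\<Sum>k. of_nat (divisor_count (Suc k)) * f (real (Suc k) * x))"
    unfolding Pf by (rule decaying.iterated_dilation_series[OF F x])
  ultimately show "voronoi f x = muentz (muentz f) x"
    unfolding voronoi_def muentz_def[of "muentz f"] by simp
qed

end
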